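(* Let $\mathcal V$ be a finite set, $2\le k\le|\mathcal V|-2$, let $\Gamma\subset\binom{\mathcal V}{k}$ be a code, and suppose that $\Gamma$ is $G$-strongly incidence-transitive with $G\le{\rm Aut}(\Gamma)\cap{\rm Sym}(\mathcal V)$. Let $\gamma\in\Gamma$, and suppose that $G_\gamma<H<G$ with $H$ transitive on $\mathcal V$ and leaving invariant a non-trivial partition $\Pi$ of $\mathcal V$. Then $\gamma$ is a union of some of the blocks of $\Pi$.
   Context: A code is a proper non-empty subset of $\binom{\mathcal V}{k}$, the $k$-subsets of $\mathcal V$ (vertices of the Johnson graph, adjacent iff meeting in $k-1$ points); ${\rm Aut}(\Gamma)$ is its setwise stabiliser in the automorphism group of the Johnson graph. $\Gamma$ is $G$-strongly incidence-transitive if $G$ is transitive on $\Gamma$ and, for $\gamma\in\Gamma$, $G_\gamma$ is transitive on $\gamma\times(\mathcal V\setminus\gamma)$. *)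

theory Defs
  imports "HOL-Algebra.Bij" "HOL-Library.Disjoint_Sets"
begin

definition ksubsets :: "'a set \<Rightarrow> nat \<Rightarrow> 'a set set" where
  "ksubsets V k = {A. A \<subseteq> V \<and> card A = k}"

definition is_code :: "'a set \<Rightarrow> nat \<Rightarrow> 'a set set \<Rightarrow> bool" where
  "is_code V k \<Gamma> \<longleftrightarrow> \<Gamma> \<subseteq> ksubsets V k \<and> \<Gamma> \<noteq> {} \<and> \<Gamma> \<noteq> ksubsets V k"

definition set_stab :: "('a \<Rightarrow> 'a) set \<Rightarrow> 'a set \<Rightarrow> ('a \<Rightarrow> 'a) set" where
  "set_stab G A = {g \<in> G. g ` A = A}"

definition strongly_incidence_transitive ::
  "'a set \<Rightarrow> ('a \<Rightarrow> 'a) set \<Rightarrow> 'a set set \<Rightarrow> bool" where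
  "strongly_incidence_transitive V G \<Gamma> \<longleftrightarrow>
     (\<forall>\<gamma>1\<in>\<Gamma>. \<forall>\<gamma>2\<in>\<Gamma>. \<exists>g\<in>G. g ` \<gamma>1 = \<gamma>2) \<and>
     (\<forall>\<gamma>\<in>\<Gamma>. \<forall>a\<in>\<gamma>. \<forall>b\<in>V - \<gamma>. \<forall>c\<in>\<gamma>. \<forall>d\<in>V - \<gamma>.
        \<exists>g\<in>set_stab G \<gamma>. g a = c \<and> g b = d)"

definition transitive_on :: "'a set \<Rightarrow> ('a \<Rightarrow> 'a) set \<Rightarrow> bool" where
  "transitive_on V H \<longleftrightarrow> (\<forall>x\<in>V. \<forall>y\<in>V. \<exists>h\<in>H. h x = y)"

definition nontrivial_partition :: "'a set \<Rightarrow> 'a set set \<Rightarrow> bool" where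
  "nontrivial_partition V P \<longleftrightarrow> partition_on V P \<and> P \<noteq> {V} \<and> P \<noteq> (\<lambda>x. {x}) ` V"

end

theory Submission
  imports Defs
begin

text \<open>A block meeting both \<open>\<gamma>\<close> and \<open>V - \<gamma>\<close> is carried by the stabiliser of \<open>\<gamma>\<close> onto a block
  containing any prescribed pair of \<open>\<gamma> \<times> (V - \<gamma>)\<close>. Since \<open>\<gamma>\<close> and \<open>V - \<gamma>\<close> are nonempty, any two
  points of \<open>V\<close> are then joined through such pairs, so all of \<open>V\<close> lies in one block and the
  partition is trivial. Hence every block meeting \<open>\<gamma>\<close> lies inside \<open>\<gamma>\<close>. Note that only the
  inclusion \<open>G\<^sub>\<gamma> \<subseteq> H\<close> and the \<open>H\<close>-invariance of the partition are needed.\<close>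

lemma partition_on_block_unique:
  assumes "partition_on V P" "B1 \<in> P" "B2 \<in> P" "x \<in> B1" "x \<in> B2"
  shows "B1 = B2"
  using assms partition_onD2 disjointD by blast

lemma straddling_block_spreads:
  assumes pair_transitive: "\<forall>a\<in>\<gamma>. \<forall>b\<in>V - \<gamma>. \<forall>c\<in>\<gamma>. \<forall>d\<in>V - \<gamma>. \<exists>g\<in>K. g a = c \<and> g b = d"
    and inv: "\<forall>g\<in>K. \<forall>B\<in>P. g ` B \<in> P"
    and B: "B \<in> P" "a \<in> B" "a \<in> \<gamma>" "b \<in> B" "b \<in> V - \<gamma>"
    and cd: "c \<in> \<gamma>" "d \<in> V - \<gamma>"
  shows "\<exists>B'\<in>P. c \<in> B' \<and> d \<in> B'"
proof -
  obtain g where "g \<in> K" "g a = c" "g b = d"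
    using pair_transitive B cd by blast
  moreover from \<open>g \<in> K\<close> have "g ` B \<in> P"
    using inv B(1) by blast
  ultimately show ?thesis
    using B(2,4) by blast
qed

lemma partition_on_single_block_if_crossing_pairs_joined:
  assumes part: "partition_on V P"
    and ne: "\<gamma> \<inter> V \<noteq> {}" "V - \<gamma> \<noteq> {}"
    and joined: "\<And>c d. c \<in> \<gamma> \<Longrightarrow> d \<in> V - \<gamma> \<Longrightarrow> \<exists>B\<in>P. c \<in> B \<and> d \<in> B"
  shows "P = {V}"
proof -
  obtain c0 d0 where c0: "c0 \<in> \<gamma>" "c0 \<in> V" and d0: "d0 \<in> V - \<gamma>"
    using ne by blast
  obtain B0 where B0: "B0 \<in> P" "c0 \<in> B0" "d0 \<in> B0"
    using joined c0 d0 by blast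
  have "x \<in> B0" if x: "x \<in> V" for x
  proof (cases "x \<in> \<gamma>")
    case True
    then obtain B where "B \<in> P" "x \<in> B" "d0 \<in> B"
      using joined d0 by blast
    then show ?thesis
      using partition_on_block_unique[OF part _ B0(1)] B0(3) by blast
  next
    case False
    then obtain B where "B \<in> P" "c0 \<in> B" "x \<in> B"
      using joined c0(1) x by blast
    then show ?thesis
      using partition_on_block_unique[OF part _ B0(1)] B0(2) by blast
  qed
  then have V_eq: "B0 = V"
    using B0(1) partition_onD1[OF part] by blast
  have "B = V" if B: "B \<in> P" for B
  proof -
    obtain y where "y \<in> B"
      using B partition_onD3[OF part] by (metis ex_in_conv)
    then show ?thesis
      using partition_on_block_unique[OF part B B0(1)] partition_onD1[OF part] B V_eq
      by blast
  qed
  then show ?thesis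
    using B0(1) V_eq by blast
qed

lemma partition_on_Union_of_blocks:
  assumes part: "partition_on V P" and "\<gamma> \<subseteq> V"
    and closed: "\<And>B. B \<in> P \<Longrightarrow> B \<inter> \<gamma> \<noteq> {} \<Longrightarrow> B \<subseteq> \<gamma>"
  shows "\<gamma> = \<Union>{B\<in>P. B \<subseteq> \<gamma>}"
proof
  show "\<gamma> \<subseteq> \<Union>{B\<in>P. B \<subseteq> \<gamma>}"
  proof
    fix x assume "x \<in> \<gamma>"
    then obtain B where "B \<in> P" "x \<in> B"
      using \<open>\<gamma> \<subseteq> V\<close> partition_onD1[OF part] by blast
    with \<open>x \<in> \<gamma>\<close> closed show "x \<in> \<Union>{B\<in>P. B \<subseteq> \<gamma>}"
      by blast
  qed
qed blast

lemma invariant_partition_blocks_inside_or_outside: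
  assumes part: "partition_on V P" and nontriv: "P \<noteq> {V}"
    and ne: "\<gamma> \<inter> V \<noteq> {}" "V - \<gamma> \<noteq> {}"
    and pair_transitive: "\<forall>a\<in>\<gamma>. \<forall>b\<in>V - \<gamma>. \<forall>c\<in>\<gamma>. \<forall>d\<in>V - \<gamma>. \<exists>g\<in>K. g a = c \<and> g b = d"
    and inv: "\<forall>g\<in>K. \<forall>B\<in>P. g ` B \<in> P"
    and B: "B \<in> P" "B \<inter> \<gamma> \<noteq> {}"
  shows "B \<subseteq> \<gamma>"
proof (rule ccontr)
  assume "\<not> B \<subseteq> \<gamma>"
  then obtain a b where "a \<in> B" "a \<in> \<gamma>" "b \<in> B" "b \<notin> \<gamma>"
    using B(2) by blast
  moreover have "b \<in> V"
    using \<open>b \<in> B\<close> B(1) partition_onD1[OF part] by blast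
  ultimately have "P = {V}"
    using partition_on_single_block_if_crossing_pairs_joined[OF part ne]
      straddling_block_spreads[OF pair_transitive inv B(1)] by blast
  with nontriv show False ..
qed

theorem lemma5p2:
  fixes V :: "'a set" and k :: nat and \<Gamma> :: "'a set set"
    and G H :: "('a \<Rightarrow> 'a) set" and \<gamma> :: "'a set" and P :: "'a set set"
  assumes "finite V"
    and "2 \<le> k" and "k + 2 \<le> card V"
    and "is_code V k \<Gamma>"
    and "subgroup G (BijGroup V)"
    and "\<forall>g\<in>G. (\<lambda>A. g ` A) ` \<Gamma> = \<Gamma>"
    and "strongly_incidence_transitive V G \<Gamma>"
    and "\<gamma> \<in> \<Gamma>"
    and "subgroup H (BijGroup V)"
    and "set_stab G \<gamma> \<subset> H" and "H \<subset> G"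
    and "transitive_on V H"
    and "nontrivial_partition V P"
    and "\<forall>h\<in>H. \<forall>B\<in>P. h ` B \<in> P"
  shows "\<exists>S\<subseteq>P. \<gamma> = \<Union>S"
proof -
  have "\<gamma> \<subseteq> V" and card_\<gamma>: "card \<gamma> = k"
    using assms(4,8) unfolding is_code_def ksubsets_def by auto
  have "card (V - \<gamma>) = card V - k"
    using assms(1) \<open>\<gamma> \<subseteq> V\<close> card_\<gamma> card_Diff_subset finite_subset by metis
  then have "V - \<gamma> \<noteq> {}"
    using assms(3) by (intro notI) simp
  moreover have "\<gamma> \<noteq> {}"
    using card_\<gamma> assms(2) by auto
  ultimately have ne: "\<gamma> \<inter> V \<noteq> {}" "V - \<gamma> \<noteq> {}"
    using \<open>\<gamma> \<subseteq> V\<close> by blast+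
  have part: "partition_on V P" and "P \<noteq> {V}"
    using assms(13) unfolding nontrivial_partition_def by auto
  have "\<forall>\<gamma>\<in>\<Gamma>. \<forall>a\<in>\<gamma>. \<forall>b\<in>V - \<gamma>. \<forall>c\<in>\<gamma>. \<forall>d\<in>V - \<gamma>.
      \<exists>g\<in>set_stab G \<gamma>. g a = c \<and> g b = d"
    using assms(7) unfolding strongly_incidence_transitive_def by (rule conjunct2)
  then have pair_transitive: "\<forall>a\<in>\<gamma>. \<forall>b\<in>V - \<gamma>. \<forall>c\<in>\<gamma>. \<forall>d\<in>V - \<gamma>.
      \<exists>g\<in>set_stab G \<gamma>. g a = c \<and> g b = d"
    using assms(8) by (rule bspec)
  have "set_stab G \<gamma> \<subseteq> H"
    using assms(10) by (rule psubset_imp_subset)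
  then have inv: "\<forall>g\<in>set_stab G \<gamma>. \<forall>B\<in>P. g ` B \<in> P"
    using assms(14) by blast
  have "B \<subseteq> \<gamma>" if "B \<in> P" "B \<inter> \<gamma> \<noteq> {}" for B
    using invariant_partition_blocks_inside_or_outside[OF part \<open>P \<noteq> {V}\<close> ne pair_transitive inv that] .
  then have "\<gamma> = \<Union>{B\<in>P. B \<subseteq> \<gamma>}"
    by (rule partition_on_Union_of_blocks[OF part \<open>\<gamma> \<subseteq> V\<close>])
  moreover have "{B\<in>P. B \<subseteq> \<gamma>} \<subseteq> P"
    by blast
  ultimately show ?thesis
    by blast
qed

end
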